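(* Let $n,t$ be positive integers and let $\mathcal{B}$ be a partition of $[n]$ into $t$ nonempty blocks. Define the set $\mathcal{R}$ of required pairs as the smallest set of pairs $(\underline{i},\mathcal{B}')$, with $\underline{i}\in[n]$ and $\mathcal{B}'\subseteq\mathcal{B}$, such that: - $(1,\mathcal{B})\in\mathcal{R}$; - whenever $(\underline{i},\mathcal{B}')\in\mathcal{R}$ with $\mathcal{B}'\neq\varnothing$, then $(\omega(\underline{i},\underline{B})+_n1,\ \mathcal{B}'\setminus\{\underline{B}\})\in\mathcal{R}$ for every $\underline{B}\in\mathcal{B}'$. These are exactly the table entries $K[\underline{i},\mathcal{B}']$ that must be computed in order to evaluate $K[1,\mathcal{B}]$ by the recurrence $$K[\underline{i},\mathcal{B}']=\min_{\underline{B}\in\mathcal{B}'}\{\delta(\underline{i},\underline{B})+K[\omega(\underline{i},\underline{B})+_n1,\mathcal{B}'\setminus\{\underline{B}\}]\}.$$ Then for every proper subset $\mathcal{B}'\subsetneq\mathcal{B}$ and every $\underline{i}\in\bigcup_{B\in\mathcal{B}'}B$, the pair $(\underline{i}+_n1,\mathcal{B}')$ does not belong to $\mathcal{R}$. In other words, the entry $K[\underline{i}+_n1,\mathcal{B}']$ is not required to be computed.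
   Context: Each block $B\in\mathcal{B}$ is written as an increasing sequence $\langle i_1<\cdots<i_\ell\rangle$ of its elements. For $\underline{i}\in[n]$: - If $\underline{i}\le i_1$ or $i_\ell<\underline{i}$, then $\omega(\underline{i},B)=i_\ell$. - Otherwise $i_l<\underline{i}\le i_{l+1}$ for a unique $l\in[\ell-1]$, and $\omega(\underline{i},B)=i_l$. $\delta(\underline{i},B)=0$ if $\underline{i}\le i_1$ and $i_\ell<n$, and $\delta(\underline{i},B)=1$ otherwise. $a+_n1$ denotes $a+1$ for $a<n$, and $n+_n1=1$. Here $K[\underline{i},\mathcal{B}']$ is the dynamic programming table of the Train Marshalling Problem. Its entry is the minimum number of segments of $A(n)$ (the infinite concatenation of copies of $\langle1,\ldots,n\rangle$) needed to place the blocks of $\mathcal{B}'$ so that the blocks do not interleave and no element is placed before position $\underline{i}$ of the first segment. *)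

theory Defs
  imports Main
begin

definition add1_mod :: "nat \<Rightarrow> nat \<Rightarrow> nat" where
  "add1_mod n a = (if a < n then a + 1 else 1)"

definition omega :: "nat \<Rightarrow> nat set \<Rightarrow> nat" where
  "omega i B = (if i \<le> Min B \<or> Max B < i then Max B else Max {x \<in> B. x < i})"

definition delta :: "nat \<Rightarrow> nat \<Rightarrow> nat set \<Rightarrow> nat" where
  "delta n i B = (if i \<le> Min B \<and> Max B < n then 0 else 1)"

definition is_partition :: "nat \<Rightarrow> nat \<Rightarrow> nat set set \<Rightarrow> bool" where
  "is_partition n t \<B> \<longleftrightarrow>
     (\<forall>B\<in>\<B>. B \<noteq> {}) \<and>
     (\<forall>B\<in>\<B>. \<forall>C\<in>\<B>. B \<noteq> C \<longrightarrow> B \<inter> C = {}) \<and>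
     \<Union>\<B> = {1..n} \<and> card \<B> = t"

inductive_set required :: "nat \<Rightarrow> nat set set \<Rightarrow> (nat \<times> nat set set) set"
  for n :: nat and \<B> :: "nat set set" where
  start: "(1, \<B>) \<in> required n \<B>"
| step: "\<lbrakk>(i, \<B>') \<in> required n \<B>; \<B>' \<noteq> {}; B \<in> \<B>'\<rbrakk>
          \<Longrightarrow> (add1_mod n (omega i B), \<B>' - {B}) \<in> required n \<B>"

end

theory Submission
  imports Defs
begin

text \<open>Every required pair other than the start pair is produced by a step that removes some
  block \<open>B\<close> and moves the index to the cyclic successor of an element of \<open>B\<close>. Since the
  cyclic successor is injective on \<open>[n]\<close>, the index \<open>i +\<^sub>n 1\<close> with \<open>i\<close> in a remaining block
  would force \<open>i\<close> into the removed block as well, contradicting disjointness.\<close>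

lemma required_subset: "(j, \<C>) \<in> required n \<B> \<Longrightarrow> \<C> \<subseteq> \<B>"
  by (induction rule: required.induct) auto

lemma omega_mem:
  assumes "finite B" "B \<noteq> {}"
  shows "omega i B \<in> B"
proof (cases "i \<le> Min B \<or> Max B < i")
  case True
  then show ?thesis using assms by (simp add: omega_def)
next
  case False
  then have "Min B < i" by simp
  then have "Min B \<in> {x \<in> B. x < i}" using assms by simp
  then have "Max {x \<in> B. x < i} \<in> {x \<in> B. x < i}"
    using assms(1) by (intro Max_in) auto
  then show ?thesis using False by (simp add: omega_def)
qed

lemma inj_on_add1_mod: "inj_on (add1_mod n) {1..n}"
  by (auto simp: inj_on_def add1_mod_def split: if_splits)

lemma required_index_from_removed_block:
  assumes "(j, \<C>) \<in> required n \<B>" "\<C> \<noteq> \<B>"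
    and "\<forall>B\<in>\<B>. finite B \<and> B \<noteq> {}"
  obtains B k where "B \<in> \<B>" "B \<notin> \<C>" "k \<in> B" "j = add1_mod n k"
  using assms(1)
proof cases
  case start
  with assms(2) show ?thesis by simp
next
  case (step j' \<C>' B)
  then have "B \<in> \<B>" using required_subset by blast
  then have "omega j' B \<in> B" using assms(3) omega_mem by blast
  with step \<open>B \<in> \<B>\<close> show ?thesis using that by blast
qed

theorem lemma1:
  fixes n t :: nat and \<B> \<B>' :: "nat set set" and i :: nat
  assumes "0 < n" and "0 < t"
    and "is_partition n t \<B>"
    and "\<B>' \<subset> \<B>"
    and "i \<in> \<Union>\<B>'"
  shows "(add1_mod n i, \<B>') \<notin> required n \<B>"
proof
  assume required: "(add1_mod n i, \<B>') \<in> required n \<B>"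
  have disjoint: "\<forall>B\<in>\<B>. \<forall>C\<in>\<B>. B \<noteq> C \<longrightarrow> B \<inter> C = {}"
    and union: "\<Union>\<B> = {1..n}" and nonempty: "\<forall>B\<in>\<B>. B \<noteq> {}"
    using assms(3) by (auto simp: is_partition_def)
  have "\<forall>B\<in>\<B>. finite B \<and> B \<noteq> {}"
  proof
    fix B assume "B \<in> \<B>"
    then have "B \<subseteq> {1..n}" using union by blast
    then show "finite B \<and> B \<noteq> {}" using nonempty \<open>B \<in> \<B>\<close> finite_subset by blast
  qed
  then obtain B k where B: "B \<in> \<B>" "B \<notin> \<B>'" "k \<in> B"
    and successor_eq: "add1_mod n i = add1_mod n k"
    using required_index_from_removed_block[OF required] assms(4) by blast
  obtain D where D: "D \<in> \<B>'" "i \<in> D" using assms(5) by blast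
  have "D \<in> \<B>" "D \<noteq> B" using D B assms(4) by auto
  then have "i \<in> {1..n}" "k \<in> {1..n}" using D B union by blast+
  then have "i = k" using inj_onD[OF inj_on_add1_mod successor_eq] by blast
  then show False using disjoint \<open>D \<in> \<B>\<close> \<open>D \<noteq> B\<close> B D by blast
qed

end
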